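(* Let $G$ and $H$ be connected graphs of order at least two such that neither $G$ nor $H$ is a complete graph. Suppose $\textnormal{diam}(G\diamond H)=3$, neither $G$ nor $H$ has a pair of distinct adjacent twins, $G$ has neither a universal vertex nor a $\gamma_G$-pair, and $H$ has a $\gamma_H$-pair. (a) If $V(H)\setminus\mathbb{P}(H)=\{h^*\}$ for a single vertex $h^*$, then $(G\diamond H)_{\rm SR}\cong \overline{G}\cup\frac{|V(G)|(|V(H)|-1)}{2}K_2$. (b) If $V(H)=\mathbb{P}(H)$, then $(G\diamond H)_{\rm SR}\cong\frac{|V(G)||V(H)|}{2}K_2$.
   Context: All graphs are finite, simple and undirected; $d(x,y)$ is the shortest-path distance; $\overline{X}$ denotes the complement of $X$; $kK_2$ is the disjoint union of $k$ copies of $K_2$ and $\cup$ denotes disjoint union; $N_X[x]=N_X(x)\cup\{x\}$. A universal vertex of $X$ is a vertex adjacent to all other vertices. Distinct vertices $u,w$ are adjacent twins if $N[u]=N[w]$. A set $D$ is a dominating set of $X$ if $\bigcup_{x\in D}N[x]=V(X)$. A pair $\{u,w\}$ is a $\gamma_X$-pair if $\{u,w\}$ is a minimum dominating set of $X$ with $N_X[u]\cap N_X[w]=\emptyset$ and $N_X[u]\cup N_X[w]=V(X)$; $\mathbb{P}(X)$ is the set of vertices of $X$ belonging to some $\gamma_X$-pair. The modular product $G\diamond H$ has vertex set $V(G)\times V(H)$, and $(g,h)$, $(g',h')$ are adjacent iff one of the following holds: ($g=g'$ and $hh'\in E(H)$), or ($h=h'$ and $gg'\in E(G)$), or ($gg'\in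 E(G)$ and $hh'\in E(H)$), or ($gg'\in E(\overline{G})$ and $hh'\in E(\overline{H})$). A vertex $u$ is maximally distant from $v$ if $d(u,v)\ge d(w,v)$ for every neighbor $w$ of $u$; $u,v$ are mutually maximally distant (MMD) if each is maximally distant from the other. For a connected graph $X$, the strong resolving graph $X_{\rm SR}$ has vertex set $\{x\in V(X): x\text{ is MMD with some }y\}$ and edges exactly the MMD pairs of $X$. *)

theory Defs
  imports Main
begin

definition graph :: "'a set \<Rightarrow> ('a \<Rightarrow> 'a \<Rightarrow> bool) \<Rightarrow> bool" where
  "graph V E \<longleftrightarrow> finite V \<and> (\<forall>x y. E x y \<longrightarrow> x \<in> V \<and> y \<in> V)
     \<and> (\<forall>x y. E x y \<longrightarrow> E y x) \<and> (\<forall>x. \<not> E x x)"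

fun walkn :: "'a set \<Rightarrow> ('a \<Rightarrow> 'a \<Rightarrow> bool) \<Rightarrow> nat \<Rightarrow> 'a \<Rightarrow> 'a \<Rightarrow> bool" where
  "walkn V E 0 u v = (u = v \<and> u \<in> V)"
| "walkn V E (Suc n) u v = (u \<in> V \<and> (\<exists>w. w \<in> V \<and> E u w \<and> walkn V E n w v))"

definition connected :: "'a set \<Rightarrow> ('a \<Rightarrow> 'a \<Rightarrow> bool) \<Rightarrow> bool" where
  "connected V E \<longleftrightarrow> V \<noteq> {} \<and> (\<forall>u\<in>V. \<forall>v\<in>V. \<exists>n. walkn V E n u v)"

definition dist :: "'a set \<Rightarrow> ('a \<Rightarrow> 'a \<Rightarrow> bool) \<Rightarrow> 'a \<Rightarrow> 'a \<Rightarrow> nat" where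
  "dist V E u v = (LEAST n. walkn V E n u v)"

definition diam :: "'a set \<Rightarrow> ('a \<Rightarrow> 'a \<Rightarrow> bool) \<Rightarrow> nat" where
  "diam V E = Max {dist V E u v | u v. u \<in> V \<and> v \<in> V}"

definition complete_graph :: "'a set \<Rightarrow> ('a \<Rightarrow> 'a \<Rightarrow> bool) \<Rightarrow> bool" where
  "complete_graph V E \<longleftrightarrow> (\<forall>u\<in>V. \<forall>v\<in>V. u \<noteq> v \<longrightarrow> E u v)"

definition compl_edges :: "'a set \<Rightarrow> ('a \<Rightarrow> 'a \<Rightarrow> bool) \<Rightarrow> 'a \<Rightarrow> 'a \<Rightarrow> bool" where
  "compl_edges V E x y \<longleftrightarrow> x \<in> V \<and> y \<in> V \<and> x \<noteq> y \<and> \<not> E x y"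

definition cnbhd :: "'a set \<Rightarrow> ('a \<Rightarrow> 'a \<Rightarrow> bool) \<Rightarrow> 'a \<Rightarrow> 'a set" where
  "cnbhd V E x = {y \<in> V. E x y} \<union> {x}"

definition universal_vertex :: "'a set \<Rightarrow> ('a \<Rightarrow> 'a \<Rightarrow> bool) \<Rightarrow> 'a \<Rightarrow> bool" where
  "universal_vertex V E x \<longleftrightarrow> x \<in> V \<and> (\<forall>y\<in>V. y \<noteq> x \<longrightarrow> E x y)"

definition adjacent_twins :: "'a set \<Rightarrow> ('a \<Rightarrow> 'a \<Rightarrow> bool) \<Rightarrow> 'a \<Rightarrow> 'a \<Rightarrow> bool" where
  "adjacent_twins V E u w \<longleftrightarrow> u \<in> V \<and> w \<in> V \<and> u \<noteq> w \<and> cnbhd V E u = cnbhd V E w"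

definition dominating :: "'a set \<Rightarrow> ('a \<Rightarrow> 'a \<Rightarrow> bool) \<Rightarrow> 'a set \<Rightarrow> bool" where
  "dominating V E D \<longleftrightarrow> D \<subseteq> V \<and> (\<Union>x\<in>D. cnbhd V E x) = V"

definition min_dominating :: "'a set \<Rightarrow> ('a \<Rightarrow> 'a \<Rightarrow> bool) \<Rightarrow> 'a set \<Rightarrow> bool" where
  "min_dominating V E D \<longleftrightarrow> dominating V E D \<and>
     (\<forall>D'. dominating V E D' \<longrightarrow> card D \<le> card D')"

definition gamma_pair :: "'a set \<Rightarrow> ('a \<Rightarrow> 'a \<Rightarrow> bool) \<Rightarrow> 'a \<Rightarrow> 'a \<Rightarrow> bool" where
  "gamma_pair V E u w \<longleftrightarrow> min_dominating V E {u, w}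
     \<and> cnbhd V E u \<inter> cnbhd V E w = {} \<and> cnbhd V E u \<union> cnbhd V E w = V"

definition PP :: "'a set \<Rightarrow> ('a \<Rightarrow> 'a \<Rightarrow> bool) \<Rightarrow> 'a set" where
  "PP V E = {x. \<exists>y. gamma_pair V E x y \<or> gamma_pair V E y x}"

definition modprod_edges ::
  "'a set \<Rightarrow> ('a \<Rightarrow> 'a \<Rightarrow> bool) \<Rightarrow> 'b set \<Rightarrow> ('b \<Rightarrow> 'b \<Rightarrow> bool) \<Rightarrow> 'a \<times> 'b \<Rightarrow> 'a \<times> 'b \<Rightarrow> bool" where
  "modprod_edges VG EG VH EH p q \<longleftrightarrow> p \<in> VG \<times> VH \<and> q \<in> VG \<times> VH \<and>
     ((fst p = fst q \<and> EH (snd p) (snd q)) \<or>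
      (snd p = snd q \<and> EG (fst p) (fst q)) \<or>
      (EG (fst p) (fst q) \<and> EH (snd p) (snd q)) \<or>
      (compl_edges VG EG (fst p) (fst q) \<and> compl_edges VH EH (snd p) (snd q)))"

definition max_distant :: "'a set \<Rightarrow> ('a \<Rightarrow> 'a \<Rightarrow> bool) \<Rightarrow> 'a \<Rightarrow> 'a \<Rightarrow> bool" where
  "max_distant V E u v \<longleftrightarrow> (\<forall>w\<in>V. E u w \<longrightarrow> dist V E w v \<le> dist V E u v)"

definition MMD :: "'a set \<Rightarrow> ('a \<Rightarrow> 'a \<Rightarrow> bool) \<Rightarrow> 'a \<Rightarrow> 'a \<Rightarrow> bool" where
  "MMD V E u v \<longleftrightarrow> u \<in> V \<and> v \<in> V \<and> u \<noteq> v \<and> max_distant V E u v \<and> max_distant V E v u"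

definition SR_verts :: "'a set \<Rightarrow> ('a \<Rightarrow> 'a \<Rightarrow> bool) \<Rightarrow> 'a set" where
  "SR_verts V E = {x \<in> V. \<exists>y. MMD V E x y}"

definition SR_edges :: "'a set \<Rightarrow> ('a \<Rightarrow> 'a \<Rightarrow> bool) \<Rightarrow> 'a \<Rightarrow> 'a \<Rightarrow> bool" where
  "SR_edges V E = MMD V E"

definition graph_iso :: "'a set \<Rightarrow> ('a \<Rightarrow> 'a \<Rightarrow> bool) \<Rightarrow> 'b set \<Rightarrow> ('b \<Rightarrow> 'b \<Rightarrow> bool) \<Rightarrow> bool" where
  "graph_iso V1 E1 V2 E2 \<longleftrightarrow> (\<exists>f. bij_betw f V1 V2 \<and>
     (\<forall>x\<in>V1. \<forall>y\<in>V1. E1 x y \<longleftrightarrow> E2 (f x) (f y)))"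

definition kK2_verts :: "nat \<Rightarrow> (nat \<times> bool) set" where
  "kK2_verts k = {..<k} \<times> UNIV"

definition kK2_edges :: "nat \<Rightarrow> nat \<times> bool \<Rightarrow> nat \<times> bool \<Rightarrow> bool" where
  "kK2_edges k p q \<longleftrightarrow> fst p < k \<and> fst p = fst q \<and> snd p \<noteq> snd q"

definition du_verts :: "'a set \<Rightarrow> 'b set \<Rightarrow> ('a + 'b) set" where
  "du_verts V1 V2 = Inl ` V1 \<union> Inr ` V2"

fun du_edges :: "('a \<Rightarrow> 'a \<Rightarrow> bool) \<Rightarrow> ('b \<Rightarrow> 'b \<Rightarrow> bool) \<Rightarrow> 'a + 'b \<Rightarrow> 'a + 'b \<Rightarrow> bool" where
  "du_edges E1 E2 (Inl x) (Inl y) = E1 x y"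
| "du_edges E1 E2 (Inr x) (Inr y) = E2 x y"
| "du_edges E1 E2 _ _ = False"

end

theory Submission
  imports Defs
begin

(* The closed neighbourhood of (g, h) in the modular product is
   {(x, y). x in N[g] <-> y in N[h]}.  Hence (g, h) and (g', h') have a common closed
   neighbour iff some vertex of G and some vertex of H lie in the same cell of the Venn
   diagrams of N[g], N[g'] and of N[h], N[h'] respectively.  As G is twin-free without
   universal vertex or gamma-pair and H is twin-free without universal vertex, this fails
   exactly when g = g' and N[h], N[h'] partition V(H), i.e. {h, h'} is a gamma_H-pair.
   These antipodal pairs are at distance 3, all other pairs at distance at most 2, and the
   product has no adjacent twins.  So adjacent vertices are never mutually maximally
   distant, antipodal pairs are, a vertex (g, h) with h in P(H) is MMD with its antipode
   only, and for h not in P(H) the vertices (g, h), (g', h) are MMD iff g, g' are distinct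
   and non-adjacent.  The antipodal pairs form a perfect matching of V(G) x P(H), and the
   row V(G) x {h*} induces the complement of G. *)

section \<open>Walks and distances\<close>

lemma walk_le_2_iff:
  assumes "graph V E" "u \<in> V" "v \<in> V"
  shows "(\<exists>n\<le>2. walkn V E n u v) \<longleftrightarrow> cnbhd V E u \<inter> cnbhd V E v \<noteq> {}"
proof -
  have "(\<exists>n\<le>2. walkn V E n u v) \<longleftrightarrow> walkn V E 0 u v \<or> walkn V E 1 u v \<or> walkn V E 2 u v"
    unfolding numeral_2_eq_2 by (auto simp: le_Suc_eq simp del: walkn.simps)
  also have "\<dots> \<longleftrightarrow> u = v \<or> E u v \<or> (\<exists>w. E u w \<and> E w v)"
    using assms unfolding graph_def numeral_2_eq_2 by auto
  also have "\<dots> \<longleftrightarrow> cnbhd V E u \<inter> cnbhd V E v \<noteq> {}"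
    using assms unfolding graph_def cnbhd_def by blast
  finally show ?thesis .
qed

lemma dist_le_iff:
  assumes "walkn V E m u v"
  shows "dist V E u v \<le> n \<longleftrightarrow> (\<exists>k\<le>n. walkn V E k u v)"
proof
  assume "dist V E u v \<le> n"
  moreover have "walkn V E (dist V E u v) u v"
    unfolding dist_def using assms by (rule LeastI)
  ultimately show "\<exists>k\<le>n. walkn V E k u v" by blast
next
  assume "\<exists>k\<le>n. walkn V E k u v"
  then show "dist V E u v \<le> n"
    unfolding dist_def by (meson Least_le order_trans)
qed

lemma dist_le_1_iff:
  assumes "graph V E" "u \<in> V" "walkn V E m u v"
  shows "dist V E u v \<le> 1 \<longleftrightarrow> u = v \<or> E u v"
proof -
  have "(\<exists>k\<le>1. walkn V E k u v) \<longleftrightarrow> u = v \<or> E u v"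
    using assms unfolding graph_def by (auto simp: le_Suc_eq)
  then show ?thesis
    using assms(3) by (simp add: dist_le_iff)
qed

lemma dist_le_2_iff:
  assumes "graph V E" "u \<in> V" "v \<in> V" "walkn V E m u v"
  shows "dist V E u v \<le> 2 \<longleftrightarrow> cnbhd V E u \<inter> cnbhd V E v \<noteq> {}"
  using assms by (simp add: dist_le_iff walk_le_2_iff)

lemma cnbhd_self: "x \<in> cnbhd V E x"
  unfolding cnbhd_def by blast

lemma cnbhd_subset: "x \<in> V \<Longrightarrow> cnbhd V E x \<subseteq> V"
  unfolding cnbhd_def by auto

lemma cnbhd_inj:
  assumes "\<not> (\<exists>u w. adjacent_twins V E u w)" "a \<in> V" "b \<in> V" "cnbhd V E a = cnbhd V E b"
  shows "a = b"
  using assms unfolding adjacent_twins_def by blast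

lemma adjacent_not_MMD:
  assumes "graph V E" and walks: "\<forall>x\<in>V. \<forall>y\<in>V. \<exists>n. walkn V E n x y"
    and "\<not> (\<exists>u w. adjacent_twins V E u w)" and "E u v"
  shows "\<not> MMD V E u v"
proof -
  have not_max_distant: "\<not> max_distant V E a b"
    if "E a b" "w \<in> V" "w \<in> cnbhd V E a" "w \<notin> cnbhd V E b" for a b w
  proof -
    have ab: "a \<in> V" "b \<in> V" "E b a"
      using \<open>graph V E\<close> \<open>E a b\<close> unfolding graph_def by auto
    have wb: "w \<noteq> b" "\<not> E w b"
      using \<open>graph V E\<close> that(4) ab(2) unfolding graph_def cnbhd_def by auto
    have "E a w"
      using that(3,4) ab(3) ab(1) unfolding cnbhd_def by auto
    obtain m m' where "walkn V E m a b" "walkn V E m' w b"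
      using walks ab(1,2) \<open>w \<in> V\<close> by blast
    then have "dist V E a b \<le> 1" "\<not> dist V E w b \<le> 1"
      using dist_le_1_iff[OF \<open>graph V E\<close>] ab(1) \<open>w \<in> V\<close> \<open>E a b\<close> wb by simp_all
    then show ?thesis
      using \<open>E a w\<close> \<open>w \<in> V\<close> unfolding max_distant_def by (meson order_trans)
  qed
  have "u \<in> V" "v \<in> V" "u \<noteq> v" "E v u"
    using \<open>graph V E\<close> \<open>E u v\<close> unfolding graph_def by auto
  then have "cnbhd V E u \<noteq> cnbhd V E v"
    using cnbhd_inj[OF assms(3)] by blast
  then obtain w where w: "w \<in> cnbhd V E u \<longleftrightarrow> w \<notin> cnbhd V E v"
    by (auto simp: set_eq_iff)
  then have "w \<in> V"
    using cnbhd_subset[OF \<open>u \<in> V\<close>] cnbhd_subset[OF \<open>v \<in> V\<close>] by blast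
  with w show ?thesis
    using not_max_distant[OF \<open>E u v\<close>] not_max_distant[OF \<open>E v u\<close>] unfolding MMD_def by blast
qed

section \<open>Complementary pairs and neighbourhood profiles\<close>

definition complementary :: "'a set \<Rightarrow> ('a \<Rightarrow> 'a \<Rightarrow> bool) \<Rightarrow> 'a \<Rightarrow> 'a \<Rightarrow> bool" where
  "complementary V E a b \<longleftrightarrow>
     cnbhd V E a \<inter> cnbhd V E b = {} \<and> cnbhd V E a \<union> cnbhd V E b = V"

lemma complementary_sym: "complementary V E a b \<Longrightarrow> complementary V E b a"
  unfolding complementary_def by blast

lemma complementary_mem:
  assumes "complementary V E a b"
  shows "a \<in> V" "b \<in> V" "a \<noteq> b"
  using assms unfolding complementary_def cnbhd_def by auto

lemma complementary_cnbhd_iff: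
  "complementary V E a b \<Longrightarrow> x \<in> V \<Longrightarrow> x \<in> cnbhd V E a \<longleftrightarrow> x \<notin> cnbhd V E b"
  unfolding complementary_def by blast

lemma complementary_unique:
  assumes "\<not> (\<exists>u w. adjacent_twins V E u w)" "complementary V E a b" "complementary V E a c"
  shows "b = c"
proof (rule cnbhd_inj[OF assms(1)])
  show "b \<in> V" using complementary_mem(2)[OF assms(2)] .
  show "c \<in> V" using complementary_mem(2)[OF assms(3)] .
  have "cnbhd V E b \<subseteq> V" "cnbhd V E c \<subseteq> V"
    using \<open>b \<in> V\<close> \<open>c \<in> V\<close> by (simp_all add: cnbhd_subset)
  then show "cnbhd V E b = cnbhd V E c"
    using assms(2,3) unfolding complementary_def by blast
qed

lemma gamma_pair_iff_complementary:
  assumes "graph V E" "\<not> (\<exists>x. universal_vertex V E x)"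
  shows "gamma_pair V E a b \<longleftrightarrow> complementary V E a b"
proof
  assume "gamma_pair V E a b"
  then show "complementary V E a b" unfolding gamma_pair_def complementary_def by blast
next
  assume ab: "complementary V E a b"
  have "card {a, b} \<le> card D" if "dominating V E D" for D
  proof -
    have "D \<subseteq> V" and cover: "(\<Union>x\<in>D. cnbhd V E x) = V"
      using that unfolding dominating_def by auto
    then have "finite D" using \<open>graph V E\<close> finite_subset unfolding graph_def by blast
    have "card D \<noteq> 1"
    proof
      assume "card D = 1"
      then obtain x where "D = {x}" by (auto simp: card_1_singleton_iff)
      then have "universal_vertex V E x"
        using cover \<open>D \<subseteq> V\<close> unfolding universal_vertex_def cnbhd_def by auto
      then show False using assms(2) by blast
    qed
    moreover have "D \<noteq> {}" using cover complementary_mem(1)[OF ab] by auto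
    ultimately have "2 \<le> card D" using \<open>finite D\<close> by (cases "card D") auto
    then show ?thesis using complementary_mem(3)[OF ab] by simp
  qed
  moreover have "dominating V E {a, b}"
    using ab complementary_mem[OF ab] unfolding dominating_def complementary_def by simp
  ultimately show "gamma_pair V E a b"
    using ab unfolding gamma_pair_def min_dominating_def complementary_def by blast
qed

lemma gamma_pair_imp_no_universal_vertex:
  assumes "gamma_pair V E a b"
  shows "\<not> universal_vertex V E x"
proof
  assume "universal_vertex V E x"
  then have "dominating V E {x}"
    unfolding universal_vertex_def dominating_def cnbhd_def by auto
  then have "card {a, b} \<le> card {x}"
    using assms unfolding gamma_pair_def min_dominating_def by blast
  moreover have "a \<noteq> b" using assms unfolding gamma_pair_def cnbhd_def by auto
  ultimately show False by simp
qed

(* The inhabited cells of the Venn diagram of N[a] and N[b]. *)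
definition cnbhd_profile :: "'a set \<Rightarrow> ('a \<Rightarrow> 'a \<Rightarrow> bool) \<Rightarrow> 'a \<Rightarrow> 'a \<Rightarrow> (bool \<times> bool) set" where
  "cnbhd_profile V E a b = (\<lambda>x. (x \<in> cnbhd V E a, x \<in> cnbhd V E b)) ` V"

lemma cnbhd_profile_adjacent:
  "a \<in> V \<Longrightarrow> a \<in> cnbhd V E b \<Longrightarrow> (True, True) \<in> cnbhd_profile V E a b"
  unfolding cnbhd_profile_def cnbhd_def by force

lemma cnbhd_profile_nonadjacent:
  assumes "graph V E" "a \<in> V" "b \<in> V" "a \<notin> cnbhd V E b"
  shows "(True, False) \<in> cnbhd_profile V E a b" "(False, True) \<in> cnbhd_profile V E a b"
proof -
  have "b \<notin> cnbhd V E a"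
    using assms unfolding graph_def cnbhd_def by auto
  then show "(True, False) \<in> cnbhd_profile V E a b" "(False, True) \<in> cnbhd_profile V E a b"
    using assms unfolding cnbhd_profile_def cnbhd_def by force+
qed

lemma cnbhd_profile_self_not_universal:
  "a \<in> V \<Longrightarrow> \<not> universal_vertex V E a \<Longrightarrow> (False, False) \<in> cnbhd_profile V E a a"
  unfolding cnbhd_profile_def cnbhd_def universal_vertex_def by force

lemma cnbhd_profile_distinct:
  assumes "\<not> (\<exists>u w. adjacent_twins V E u w)" "a \<in> V" "b \<in> V" "a \<noteq> b"
  shows "(True, False) \<in> cnbhd_profile V E a b \<or> (False, True) \<in> cnbhd_profile V E a b"
proof -
  have "cnbhd V E a \<noteq> cnbhd V E b"
    using cnbhd_inj[OF assms(1)] assms(2-4) by blast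
  then obtain x where x: "x \<in> cnbhd V E a \<longleftrightarrow> x \<notin> cnbhd V E b"
    by (auto simp: set_eq_iff)
  then have "x \<in> V"
    using cnbhd_subset[OF assms(2)] cnbhd_subset[OF assms(3)] by blast
  with x show ?thesis
    unfolding cnbhd_profile_def by (cases "x \<in> cnbhd V E a") force+
qed

lemma cnbhd_profile_not_complementary:
  assumes "a \<in> V" "b \<in> V" "\<not> complementary V E a b"
  shows "(True, True) \<in> cnbhd_profile V E a b \<or> (False, False) \<in> cnbhd_profile V E a b"
proof -
  have "cnbhd V E a \<union> cnbhd V E b \<subseteq> V"
    using cnbhd_subset[OF assms(1)] cnbhd_subset[OF assms(2)] by blast
  with assms(3) have "(\<exists>x\<in>V. x \<in> cnbhd V E a \<and> x \<in> cnbhd V E b) \<or>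
      (\<exists>x\<in>V. x \<notin> cnbhd V E a \<and> x \<notin> cnbhd V E b)"
    unfolding complementary_def by auto
  then show ?thesis
    unfolding cnbhd_profile_def by force
qed

section \<open>Closed neighbourhoods in the modular product\<close>

lemma modprod_cnbhd_iff:
  assumes "graph VG EG" "graph VH EH" "g \<in> VG" "h \<in> VH" "x \<in> VG" "y \<in> VH"
  shows "(x, y) \<in> cnbhd (VG \<times> VH) (modprod_edges VG EG VH EH) (g, h) \<longleftrightarrow>
    (x \<in> cnbhd VG EG g \<longleftrightarrow> y \<in> cnbhd VH EH h)"
proof -
  have "\<not> EG g g" "\<not> EH h h"
    using assms(1,2) unfolding graph_def by auto
  with assms(3-6) show ?thesis
    unfolding cnbhd_def modprod_edges_def compl_edges_def
    by (cases "x = g"; cases "y = h") auto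
qed

lemma modprod_cnbhd:
  assumes "graph VG EG" "graph VH EH" "g \<in> VG" "h \<in> VH"
  shows "cnbhd (VG \<times> VH) (modprod_edges VG EG VH EH) (g, h) =
    {(x, y) \<in> VG \<times> VH. x \<in> cnbhd VG EG g \<longleftrightarrow> y \<in> cnbhd VH EH h}"
  using modprod_cnbhd_iff[OF assms] cnbhd_subset[of "(g, h)" "VG \<times> VH"] assms(3,4) by auto

lemma graph_modprod:
  assumes "graph VG EG" "graph VH EH"
  shows "graph (VG \<times> VH) (modprod_edges VG EG VH EH)"
proof -
  have "EG x y \<longleftrightarrow> EG y x" "EH x' y' \<longleftrightarrow> EH y' x'" "\<not> EG x x" "\<not> EH x' x'" for x y x' y'
    using assms unfolding graph_def by blast+
  moreover have "finite (VG \<times> VH)"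
    using assms unfolding graph_def by simp
  ultimately show ?thesis
    unfolding graph_def modprod_edges_def compl_edges_def by auto
qed

lemma modprod_edges_same_snd:
  assumes "graph VH EH"
  shows "modprod_edges VG EG VH EH (g, h) (g', h) \<longleftrightarrow> g \<in> VG \<and> g' \<in> VG \<and> h \<in> VH \<and> EG g g'"
proof -
  have "\<not> EH h h" using assms unfolding graph_def by blast
  then show ?thesis unfolding modprod_edges_def compl_edges_def by auto
qed

lemma modprod_common_cnbhd_iff:
  assumes "graph VG EG" "graph VH EH" "u \<in> VG \<times> VH" "v \<in> VG \<times> VH"
  shows "cnbhd (VG \<times> VH) (modprod_edges VG EG VH EH) u \<inter> cnbhd (VG \<times> VH) (modprod_edges VG EG VH EH) v \<noteq> {}
    \<longleftrightarrow> cnbhd_profile VG EG (fst u) (fst v) \<inter> cnbhd_profile VH EH (snd u) (snd v) \<noteq> {}"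
    (is "?common \<longleftrightarrow> _")
proof -
  obtain g h g' h' where uv: "u = (g, h)" "v = (g', h')"
    and in_V: "g \<in> VG" "h \<in> VH" "g' \<in> VG" "h' \<in> VH"
    using assms(3,4) by auto
  have "?common \<longleftrightarrow> (\<exists>x\<in>VG. \<exists>y\<in>VH.
      (x \<in> cnbhd VG EG g, x \<in> cnbhd VG EG g') = (y \<in> cnbhd VH EH h, y \<in> cnbhd VH EH h'))"
    unfolding uv modprod_cnbhd[OF assms(1,2) in_V(1,2)] modprod_cnbhd[OF assms(1,2) in_V(3,4)]
    by blast
  also have "\<dots> \<longleftrightarrow> cnbhd_profile VG EG g g' \<inter> cnbhd_profile VH EH h h' \<noteq> {}"
    unfolding cnbhd_profile_def by blast
  finally show ?thesis using uv by simp
qed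

lemma graph_iso_cong:
  assumes "graph_iso V E W F" "\<And>x y. x \<in> V \<Longrightarrow> y \<in> V \<Longrightarrow> E x y \<longleftrightarrow> E' x y"
  shows "graph_iso V E' W F"
  using assms unfolding graph_iso_def by blast

lemma graph_iso_row:
  assumes "\<And>x y. x \<in> V \<Longrightarrow> y \<in> V \<Longrightarrow> E (x, h) (y, h) \<longleftrightarrow> F x y"
  shows "graph_iso (V \<times> {h}) E V F"
proof -
  have "bij_betw fst (V \<times> {h}) V"
    by (auto simp: bij_betw_def inj_on_def)
  then show ?thesis
    unfolding graph_iso_def using assms by (intro exI[of _ fst]) auto
qed

lemma graph_iso_disjoint_union:
  assumes "graph_iso V1 E W1 F1" "graph_iso V2 E W2 F2" "V1 \<inter> V2 = {}"
    and "\<And>x y. x \<in> V1 \<Longrightarrow> y \<in> V2 \<Longrightarrow> \<not> E x y \<and> \<not> E y x"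
  shows "graph_iso (V1 \<union> V2) E (du_verts W1 W2) (du_edges F1 F2)"
proof -
  obtain f1 f2 where f1: "bij_betw f1 V1 W1" "\<forall>x\<in>V1. \<forall>y\<in>V1. E x y \<longleftrightarrow> F1 (f1 x) (f1 y)"
    and f2: "bij_betw f2 V2 W2" "\<forall>x\<in>V2. \<forall>y\<in>V2. E x y \<longleftrightarrow> F2 (f2 x) (f2 y)"
    using assms(1,2) unfolding graph_iso_def by blast
  define f where "f x = (if x \<in> V1 then Inl (f1 x) else Inr (f2 x))" for x
  have "bij_betw f V1 (Inl ` W1)"
  proof (rule bij_betw_cong[THEN iffD1])
    show "bij_betw (\<lambda>x. Inl (f1 x)) V1 (Inl ` W1)"
      using f1(1) unfolding bij_betw_def inj_on_def by auto
  qed (simp add: f_def)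
  moreover have "bij_betw f V2 (Inr ` W2)"
  proof (rule bij_betw_cong[THEN iffD1])
    show "bij_betw (\<lambda>x. Inr (f2 x)) V2 (Inr ` W2)"
      using f2(1) unfolding bij_betw_def inj_on_def by auto
  qed (use assms(3) in \<open>auto simp: f_def\<close>)
  ultimately have "bij_betw f (V1 \<union> V2) (du_verts W1 W2)"
    unfolding du_verts_def by (rule bij_betw_combine) auto
  moreover have "E x y \<longleftrightarrow> du_edges F1 F2 (f x) (f y)" if "x \<in> V1 \<union> V2" "y \<in> V1 \<union> V2" for x y
    using that f1(2) f2(2) assms(3,4) unfolding f_def by auto
  ultimately show ?thesis
    unfolding graph_iso_def by blast
qed

lemma involution_transversal:
  assumes "finite S" and inv: "\<And>x. x \<in> S \<Longrightarrow> p x \<in> S \<and> p x \<noteq> x \<and> p (p x) = x"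
  obtains R where "R \<subseteq> S" "\<And>x. x \<in> S \<Longrightarrow> x \<in> R \<longleftrightarrow> p x \<notin> R"
proof -
  obtain idx :: "'a \<Rightarrow> nat" where "inj_on idx S"
    using \<open>finite S\<close> finite_imp_inj_to_nat_seg by blast
  define R where "R = {x \<in> S. idx x < idx (p x)}"
  have "x \<in> R \<longleftrightarrow> p x \<notin> R" if "x \<in> S" for x
  proof -
    have "idx (p x) \<noteq> idx x"
      using inv[OF that] inj_onD[OF \<open>inj_on idx S\<close>] that by metis
    then show ?thesis
      using inv[OF that] that unfolding R_def by auto
  qed
  then show ?thesis
    using that[of R] unfolding R_def by blast
qed

lemma transversal_bij_kK2:
  assumes "R \<subseteq> S" and inv: "\<And>x. x \<in> S \<Longrightarrow> p x \<in> S \<and> p (p x) = x"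
    and R_iff: "\<And>x. x \<in> S \<Longrightarrow> x \<in> R \<longleftrightarrow> p x \<notin> R" and r: "bij_betw r R {..<card R}"
  shows "bij_betw (\<lambda>x. (r (if x \<in> R then x else p x), x \<in> R)) S (kK2_verts (card R))"
proof -
  define s where "s = the_inv_into R r"
  have s: "s i \<in> R" "r (s i) = i" if "i < card R" for i
    using that bij_betw_apply[OF bij_betw_the_inv_into[OF r]] f_the_inv_into_f_bij_betw[OF r]
    unfolding s_def by auto
  have s_r: "s (r x) = x" if "x \<in> R" for x
    using that r unfolding s_def bij_betw_def by (simp add: the_inv_into_f_f)
  define f where "f = (\<lambda>x. (r (if x \<in> R then x else p x), x \<in> R))"
  define g where "g i = (if snd i then s (fst i) else p (s (fst i)))" for i
  have "bij_betw f S (kK2_verts (card R))"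
  proof (rule bij_betw_byWitness[where f' = g])
    show "\<forall>x\<in>S. g (f x) = x"
    proof
      fix x assume "x \<in> S"
      then have "p x \<in> R \<longleftrightarrow> x \<notin> R" "p (p x) = x"
        using R_iff inv by blast+
      then show "g (f x) = x"
        using s_r \<open>x \<in> S\<close> R_iff unfolding f_def g_def by auto
    qed
    show "\<forall>i\<in>kK2_verts (card R). f (g i) = i"
    proof
      fix i assume "i \<in> kK2_verts (card R)"
      then have j: "s (fst i) \<in> R" "r (s (fst i)) = fst i"
        using s unfolding kK2_verts_def by auto
      then have "p (s (fst i)) \<notin> R" "p (p (s (fst i))) = s (fst i)"
        using R_iff inv \<open>R \<subseteq> S\<close> by blast+
      with j show "f (g i) = i"
        unfolding f_def g_def by (cases i) auto
    qed
    have "(if x \<in> R then x else p x) \<in> R" if "x \<in> S" for x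
      using R_iff[OF that] by auto
    then show "f ` S \<subseteq> kK2_verts (card R)"
      using bij_betw_apply[OF r] unfolding f_def kK2_verts_def by auto
    have "s j \<in> S \<and> p (s j) \<in> S" if "j < card R" for j
      using s(1)[OF that] \<open>R \<subseteq> S\<close> inv by blast
    then show "g ` kK2_verts (card R) \<subseteq> S"
      unfolding g_def kK2_verts_def by auto
  qed
  then show ?thesis unfolding f_def .
qed

lemma involution_graph_iso_kK2:
  assumes "finite S" and inv: "\<And>x. x \<in> S \<Longrightarrow> p x \<in> S \<and> p x \<noteq> x \<and> p (p x) = x"
  shows "graph_iso S (\<lambda>x y. y = p x) (kK2_verts (card S div 2)) (kK2_edges (card S div 2))"
proof -
  obtain R where "R \<subseteq> S" and R_iff: "\<And>x. x \<in> S \<Longrightarrow> x \<in> R \<longleftrightarrow> p x \<notin> R"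
    using involution_transversal[OF assms] by blast
  obtain r where r: "bij_betw r R {..<card R}"
    using ex_bij_betw_finite_nat[of R] finite_subset[OF \<open>R \<subseteq> S\<close> \<open>finite S\<close>]
    by (auto simp: atLeast0LessThan)
  define rep where "rep x = (if x \<in> R then x else p x)" for x
  have rep: "rep x \<in> R" if "x \<in> S" for x
    using R_iff[OF that] unfolding rep_def by auto
  define f where "f x = (r (rep x), x \<in> R)" for x
  have bij: "bij_betw f S (kK2_verts (card R))"
    using transversal_bij_kK2[OF \<open>R \<subseteq> S\<close> _ R_iff r] inv unfolding f_def rep_def by blast
  then have "card S div 2 = card R"
    using bij_betw_same_card by (fastforce simp: kK2_verts_def card_cartesian_product)
  moreover have "kK2_edges (card R) (f x) (f y) \<longleftrightarrow> y = p x" if "x \<in> S" "y \<in> S" for x y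
  proof -
    have "kK2_edges (card R) (f x) (f y) \<longleftrightarrow> rep x = rep y \<and> (x \<in> R \<longleftrightarrow> y \<notin> R)"
      using bij_betw_apply[OF r] bij_betw_imp_inj_on[OF r] rep that
      unfolding kK2_edges_def f_def inj_on_def by auto
    also have "\<dots> \<longleftrightarrow> y = p x"
      using that inv R_iff unfolding rep_def by metis
    finally show ?thesis .
  qed
  ultimately show ?thesis
    using bij unfolding graph_iso_def by auto
qed

section \<open>The strong resolving graph of the modular product\<close>

locale modular_product =
  fixes VG :: "'a set" and EG :: "'a \<Rightarrow> 'a \<Rightarrow> bool"
    and VH :: "'b set" and EH :: "'b \<Rightarrow> 'b \<Rightarrow> bool"
  assumes graph_G: "graph VG EG" and graph_H: "graph VH EH"
    and twin_free_G: "\<not> (\<exists>u w. adjacent_twins VG EG u w)"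
    and twin_free_H: "\<not> (\<exists>u w. adjacent_twins VH EH u w)"
    and no_universal_G: "\<not> (\<exists>x. universal_vertex VG EG x)"
    and no_universal_H: "\<not> (\<exists>x. universal_vertex VH EH x)"
    and no_complementary_G: "\<not> (\<exists>a b. complementary VG EG a b)"
begin

abbreviation "VP \<equiv> VG \<times> VH"
abbreviation "EP \<equiv> modprod_edges VG EG VH EH"

lemma EP_sym: "EP u v \<Longrightarrow> EP v u"
  using graph_modprod[OF graph_G graph_H] unfolding graph_def by blast

definition antipodal :: "'a \<times> 'b \<Rightarrow> 'a \<times> 'b \<Rightarrow> bool" where
  "antipodal u v \<longleftrightarrow> fst u = fst v \<and> complementary VH EH (snd u) (snd v)"

lemma antipodal_sym: "antipodal u v \<Longrightarrow> antipodal v u"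
  unfolding antipodal_def using complementary_sym by metis

lemma mem_PP_iff: "h \<in> PP VH EH \<longleftrightarrow> (\<exists>k. complementary VH EH h k)"
  unfolding PP_def gamma_pair_iff_complementary[OF graph_H no_universal_H]
  using complementary_sym[of VH EH _ h] by auto

definition partner :: "'b \<Rightarrow> 'b" where
  "partner h = (THE k. complementary VH EH h k)"

lemma partner_eq: "complementary VH EH h k \<Longrightarrow> partner h = k"
  unfolding partner_def using complementary_unique[OF twin_free_H] by blast

lemma complementary_partner: "h \<in> PP VH EH \<Longrightarrow> complementary VH EH h (partner h)"
  using mem_PP_iff partner_eq by blast

definition antipode :: "'a \<times> 'b \<Rightarrow> 'a \<times> 'b" where
  "antipode u = (fst u, partner (snd u))"

lemma antipodal_iff_antipode:
  "snd u \<in> PP VH EH \<Longrightarrow> antipodal u v \<longleftrightarrow> v = antipode u"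
  unfolding antipodal_def antipode_def using complementary_partner partner_eq
  by (cases v) auto

lemma PP_subset: "PP VH EH \<subseteq> VH"
proof
  fix h assume "h \<in> PP VH EH"
  then obtain k where "complementary VH EH h k"
    using mem_PP_iff by blast
  then show "h \<in> VH" by (rule complementary_mem(1))
qed

lemma antipode_involution:
  assumes "u \<in> VG \<times> PP VH EH"
  shows "antipode u \<in> VG \<times> PP VH EH" "antipode u \<noteq> u" "antipode (antipode u) = u"
proof -
  obtain g h where u: "u = (g, h)" "g \<in> VG" "h \<in> PP VH EH"
    using assms by auto
  have hk: "complementary VH EH h (partner h)"
    using complementary_partner[OF u(3)] .
  then have "complementary VH EH (partner h) h"
    by (rule complementary_sym)
  then have "partner h \<in> PP VH EH" "partner (partner h) = h"
    using mem_PP_iff partner_eq by blast+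
  moreover have "partner h \<noteq> h"
    using complementary_mem(3)[OF hk] by simp
  ultimately show "antipode u \<in> VG \<times> PP VH EH" "antipode u \<noteq> u" "antipode (antipode u) = u"
    using u unfolding antipode_def by simp_all
qed

lemma antipodal_complementary:
  assumes "u \<in> VP" "antipodal u v"
  shows "complementary VP EP u v"
proof -
  obtain g h h' where uv: "u = (g, h)" "v = (g, h')" and "g \<in> VG"
    and hh': "complementary VH EH h h'"
    using assms unfolding antipodal_def by (cases u, cases v) auto
  have "h \<in> VH" "h' \<in> VH"
    using complementary_mem(1,2)[OF hh'] by simp_all
  have "y \<in> cnbhd VH EH h \<longleftrightarrow> y \<notin> cnbhd VH EH h'" if "y \<in> VH" for y
    using complementary_cnbhd_iff[OF hh' that] .
  then show ?thesis
    unfolding complementary_def uv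
      modprod_cnbhd[OF graph_G graph_H \<open>g \<in> VG\<close> \<open>h \<in> VH\<close>]
      modprod_cnbhd[OF graph_G graph_H \<open>g \<in> VG\<close> \<open>h' \<in> VH\<close>]
    by auto
qed

lemma cnbhd_profiles_meet_same_fst:
  assumes "g \<in> VG" "h \<in> VH" "h' \<in> VH" "\<not> complementary VH EH h h'"
  shows "cnbhd_profile VG EG g g \<inter> cnbhd_profile VH EH h h' \<noteq> {}"
proof -
  have "(True, True) \<in> cnbhd_profile VG EG g g" "(False, False) \<in> cnbhd_profile VG EG g g"
    using cnbhd_profile_adjacent[OF assms(1) cnbhd_self]
      cnbhd_profile_self_not_universal[OF assms(1)] no_universal_G by auto
  moreover have "(True, True) \<in> cnbhd_profile VH EH h h' \<or> (False, False) \<in> cnbhd_profile VH EH h h'"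
    using cnbhd_profile_not_complementary[OF assms(2-4)] .
  ultimately show ?thesis by blast
qed

lemma cnbhd_profiles_meet_distinct_fst:
  assumes "g \<in> VG" "g' \<in> VG" "g \<noteq> g'" "h \<in> VH" "h' \<in> VH"
  shows "cnbhd_profile VG EG g g' \<inter> cnbhd_profile VH EH h h' \<noteq> {}"
proof -
  let ?pG = "cnbhd_profile VG EG g g'" and ?pH = "cnbhd_profile VH EH h h'"
  have G_unequal: "(True, False) \<in> ?pG \<or> (False, True) \<in> ?pG"
    using cnbhd_profile_distinct[OF twin_free_G assms(1-3)] .
  have G_equal: "(True, True) \<in> ?pG \<or> (False, False) \<in> ?pG"
    using cnbhd_profile_not_complementary[OF assms(1,2)] no_complementary_G by blast
  consider "h = h'" | "h \<noteq> h'" "h \<in> cnbhd VH EH h'" | "h \<notin> cnbhd VH EH h'"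
    using cnbhd_self by blast
  then show ?thesis
  proof cases
    case 1
    then have "(True, True) \<in> ?pH" "(False, False) \<in> ?pH"
      using cnbhd_profile_adjacent[OF assms(4) cnbhd_self]
        cnbhd_profile_self_not_universal[OF assms(4)] no_universal_H by auto
    with G_equal show ?thesis by blast
  next
    case 2
    then have "(True, True) \<in> ?pH" "(True, False) \<in> ?pH \<or> (False, True) \<in> ?pH"
      using cnbhd_profile_adjacent[OF assms(4)] cnbhd_profile_distinct[OF twin_free_H assms(4,5)]
      by blast+
    moreover have "(True, True) \<in> ?pG \<or> ((True, False) \<in> ?pG \<and> (False, True) \<in> ?pG)"
      using cnbhd_profile_adjacent[OF assms(1)] cnbhd_profile_nonadjacent[OF graph_G assms(1,2)]
      by blast
    ultimately show ?thesis by blast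
  next
    case 3
    then have "(True, False) \<in> ?pH" "(False, True) \<in> ?pH"
      using cnbhd_profile_nonadjacent[OF graph_H assms(4,5)] by blast+
    with G_unequal show ?thesis by blast
  qed
qed

lemma common_cnbhd_iff_not_antipodal:
  assumes "u \<in> VP" "v \<in> VP"
  shows "cnbhd VP EP u \<inter> cnbhd VP EP v \<noteq> {} \<longleftrightarrow> \<not> antipodal u v"
proof
  assume "cnbhd VP EP u \<inter> cnbhd VP EP v \<noteq> {}"
  then show "\<not> antipodal u v"
    using antipodal_complementary[OF assms(1)] unfolding complementary_def by blast
next
  assume "\<not> antipodal u v"
  moreover obtain g h g' h' where "u = (g, h)" "v = (g', h')"
    and "g \<in> VG" "h \<in> VH" "g' \<in> VG" "h' \<in> VH"
    using assms by auto
  ultimately have "cnbhd_profile VG EG (fst u) (fst v) \<inter> cnbhd_profile VH EH (snd u) (snd v) \<noteq> {}"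
    using cnbhd_profiles_meet_same_fst cnbhd_profiles_meet_distinct_fst
    unfolding antipodal_def by (cases "g = g'") auto
  then show "cnbhd VP EP u \<inter> cnbhd VP EP v \<noteq> {}"
    using modprod_common_cnbhd_iff[OF graph_G graph_H assms] by simp
qed

lemma antipodal_neighbour:
  assumes "u \<in> VP" "antipodal u v"
  obtains w where "w \<in> VP" "EP u w" "\<not> antipodal w v"
proof -
  obtain g h h' where uv: "u = (g, h)" "v = (g, h')" and "g \<in> VG"
    and hh': "complementary VH EH h h'"
    using assms unfolding antipodal_def by (cases u, cases v) auto
  obtain x where x: "x \<in> VG" "x \<noteq> g" "\<not> EG g x"
    using no_universal_G \<open>g \<in> VG\<close> unfolding universal_vertex_def by blast
  have "h \<in> VH" "h' \<in> VH"
    using complementary_mem(1,2)[OF hh'] by simp_all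
  have "h' \<notin> cnbhd VH EH h"
    using complementary_cnbhd_iff[OF hh' \<open>h' \<in> VH\<close>] cnbhd_self[of h' VH EH] by simp
  moreover have "x \<notin> cnbhd VG EG g"
    using x unfolding cnbhd_def by auto
  ultimately have "(x, h') \<in> cnbhd VP EP u"
    using modprod_cnbhd_iff[OF graph_G graph_H \<open>g \<in> VG\<close> \<open>h \<in> VH\<close> x(1) \<open>h' \<in> VH\<close>] uv
    by simp
  with x(2) uv have "EP u (x, h')"
    unfolding cnbhd_def by auto
  moreover have "\<not> antipodal (x, h') v"
    using x(2) uv unfolding antipodal_def by simp
  ultimately show ?thesis
    using that x(1) \<open>h' \<in> VH\<close> by blast
qed

lemma walk_le_3:
  assumes "u \<in> VP" "v \<in> VP"
  shows "\<exists>n\<le>3. walkn VP EP n u v"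
proof (cases "antipodal u v")
  case False
  then obtain n where "n \<le> 2" "walkn VP EP n u v"
    using common_cnbhd_iff_not_antipodal[OF assms]
      walk_le_2_iff[OF graph_modprod[OF graph_G graph_H] assms] by blast
  then show ?thesis
    by (intro exI[of _ n]) simp
next
  case True
  then obtain w where w: "w \<in> VP" "EP u w" "\<not> antipodal w v"
    using antipodal_neighbour[OF assms(1)] by blast
  then obtain n where "n \<le> 2" "walkn VP EP n w v"
    using common_cnbhd_iff_not_antipodal[OF w(1) assms(2)]
      walk_le_2_iff[OF graph_modprod[OF graph_G graph_H] w(1) assms(2)] by blast
  then have "walkn VP EP (Suc n) u v"
    using w(1,2) assms(1) by auto
  then show ?thesis
    using \<open>n \<le> 2\<close> by (intro exI[of _ "Suc n"]) simp
qed

lemma walks_exist: "\<forall>u\<in>VP. \<forall>v\<in>VP. \<exists>n. walkn VP EP n u v"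
  using walk_le_3 by blast

lemma dist_le_3:
  assumes "u \<in> VP" "v \<in> VP"
  shows "dist VP EP u v \<le> 3"
proof -
  obtain n where "n \<le> 3" "walkn VP EP n u v"
    using walk_le_3[OF assms] by blast
  then show ?thesis
    using dist_le_iff[of VP EP n u v 3] by blast
qed

lemma dist_le_2_iff_not_antipodal:
  assumes "u \<in> VP" "v \<in> VP"
  shows "dist VP EP u v \<le> 2 \<longleftrightarrow> \<not> antipodal u v"
proof -
  obtain n where "walkn VP EP n u v" using walks_exist assms by blast
  then show ?thesis
    using dist_le_2_iff[OF graph_modprod[OF graph_G graph_H] assms]
      common_cnbhd_iff_not_antipodal[OF assms] by simp
qed

lemma twin_free_modprod: "\<not> (\<exists>u w. adjacent_twins VP EP u w)"
proof
  assume "\<exists>u w. adjacent_twins VP EP u w"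
  then obtain g h g' h' where in_V: "g \<in> VG" "h \<in> VH" "g' \<in> VG" "h' \<in> VH"
    and "(g, h) \<noteq> (g', h')" and same: "cnbhd VP EP (g, h) = cnbhd VP EP (g', h')"
    unfolding adjacent_twins_def by auto
  have eq: "(x \<in> cnbhd VG EG g \<longleftrightarrow> y \<in> cnbhd VH EH h) \<longleftrightarrow>
      (x \<in> cnbhd VG EG g' \<longleftrightarrow> y \<in> cnbhd VH EH h')" if "x \<in> VG" "y \<in> VH" for x y
    using same modprod_cnbhd_iff[OF graph_G graph_H _ _ that] in_V by metis
  show False
  proof (cases "g = g'")
    case True
    have "y \<in> cnbhd VH EH h \<longleftrightarrow> y \<in> cnbhd VH EH h'" if "y \<in> VH" for y
      using eq[OF in_V(1) that] True cnbhd_self[of g VG EG] by simp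
    then have "cnbhd VH EH h = cnbhd VH EH h'"
      using cnbhd_subset[OF in_V(2)] cnbhd_subset[OF in_V(4)] by blast
    then show False
      using cnbhd_inj[OF twin_free_H in_V(2,4)] True \<open>(g, h) \<noteq> (g', h')\<close> by simp
  next
    case False
    have "\<not> complementary VG EG g g'"
      using no_complementary_G by blast
    obtain x1 where x1: "x1 \<in> VG" "x1 \<in> cnbhd VG EG g \<longleftrightarrow> x1 \<notin> cnbhd VG EG g'"
      using cnbhd_profile_distinct[OF twin_free_G in_V(1,3) False]
      unfolding cnbhd_profile_def by auto
    obtain x2 where x2: "x2 \<in> VG" "x2 \<in> cnbhd VG EG g \<longleftrightarrow> x2 \<in> cnbhd VG EG g'"
      using cnbhd_profile_not_complementary[OF in_V(1,3) \<open>\<not> complementary VG EG g g'\<close>]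
      unfolding cnbhd_profile_def by auto
    (* x1 forces h \<notin> N[h'], x2 forces h \<in> N[h']. *)
    have "h \<in> cnbhd VH EH h" by (rule cnbhd_self)
    then have "x1 \<in> cnbhd VG EG g \<longleftrightarrow> (x1 \<in> cnbhd VG EG g' \<longleftrightarrow> h \<in> cnbhd VH EH h')"
      "x2 \<in> cnbhd VG EG g \<longleftrightarrow> (x2 \<in> cnbhd VG EG g' \<longleftrightarrow> h \<in> cnbhd VH EH h')"
      using eq[OF x1(1) in_V(2)] eq[OF x2(1) in_V(2)] by simp_all
    with x1(2) x2(2) show False by blast
  qed
qed

lemma antipodal_MMD:
  assumes "u \<in> VP" "v \<in> VP" "antipodal u v"
  shows "MMD VP EP u v"
proof -
  have "\<not> dist VP EP u v \<le> 2" "\<not> dist VP EP v u \<le> 2"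
    using dist_le_2_iff_not_antipodal assms antipodal_sym[OF assms(3)] by simp_all
  then have "dist VP EP u v = 3" "dist VP EP v u = 3"
    using dist_le_3[OF assms(1,2)] dist_le_3[OF assms(2,1)] by simp_all
  then have "max_distant VP EP u v" "max_distant VP EP v u"
    using dist_le_3 assms(1,2) unfolding max_distant_def by simp_all
  moreover have "u \<noteq> v"
    using assms(3) complementary_mem(3)[of VH EH "snd u" "snd v"] unfolding antipodal_def by auto
  ultimately show ?thesis
    using assms(1,2) unfolding MMD_def by blast
qed

lemma MMD_imp_antipodal:
  assumes "u \<in> VP" "v \<in> VP" "MMD VP EP u v" "snd v \<in> PP VH EH"
  shows "antipodal u v"
proof (rule ccontr)
  (* N[v] and N[antipode v] partition the vertices, so u is adjacent to antipode v,
     which lies farther from v than u does. *)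
  assume not_antipodal: "\<not> antipodal u v"
  define w where "w = antipode v"
  have "antipodal v w" "antipodal w v"
    using antipodal_iff_antipode[OF assms(4)] antipodal_sym unfolding w_def by blast+
  have "w \<in> VP"
    using antipode_involution(1)[of v] assms(2,4) PP_subset unfolding w_def by (cases v) auto
  have "\<not> EP u v" "u \<noteq> v"
    using adjacent_not_MMD[OF graph_modprod[OF graph_G graph_H] walks_exist twin_free_modprod] assms(3)
    unfolding MMD_def by blast+
  then have "u \<notin> cnbhd VP EP v"
    using EP_sym unfolding cnbhd_def by blast
  then have "u \<in> cnbhd VP EP w"
    using complementary_cnbhd_iff[OF antipodal_complementary[OF assms(2) \<open>antipodal v w\<close>] assms(1)]
    by simp
  moreover have "u \<noteq> w"
    using not_antipodal \<open>antipodal w v\<close> by blast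
  ultimately have "EP u w"
    using EP_sym unfolding cnbhd_def by blast
  moreover have "dist VP EP u v \<le> 2" "\<not> dist VP EP w v \<le> 2"
    using dist_le_2_iff_not_antipodal assms(1,2) \<open>w \<in> VP\<close> not_antipodal \<open>antipodal w v\<close>
    by simp_all
  ultimately have "\<not> max_distant VP EP u v"
    using \<open>w \<in> VP\<close> unfolding max_distant_def by force
  then show False
    using assms(3) unfolding MMD_def by blast
qed

lemma MMD_row_iff:
  assumes "g \<in> VG" "g' \<in> VG" "h \<in> VH" "h \<notin> PP VH EH"
  shows "MMD VP EP (g, h) (g', h) \<longleftrightarrow> compl_edges VG EG g g'"
proof
  assume "MMD VP EP (g, h) (g', h)"
  then have "g \<noteq> g'" "\<not> EP (g, h) (g', h)"
    using adjacent_not_MMD[OF graph_modprod[OF graph_G graph_H] walks_exist twin_free_modprod]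
    unfolding MMD_def by blast+
  then show "compl_edges VG EG g g'"
    using assms(1-3) unfolding compl_edges_def modprod_edges_same_snd[OF graph_H] by simp
next
  assume "compl_edges VG EG g g'"
  then have "g \<noteq> g'" "\<not> EG g g'" "\<not> EG g' g"
    using graph_G unfolding compl_edges_def graph_def by auto
  moreover obtain m m' where "walkn VP EP m (g, h) (g', h)" "walkn VP EP m' (g', h) (g, h)"
    using walks_exist assms(1-3) by blast
  ultimately have far: "\<not> dist VP EP (g, h) (g', h) \<le> 1" "\<not> dist VP EP (g', h) (g, h) \<le> 1"
    using dist_le_1_iff[OF graph_modprod[OF graph_G graph_H]] assms(1-3)
    by (simp_all add: modprod_edges_same_snd[OF graph_H])
  have near: "dist VP EP w (x, h) \<le> 2" if "w \<in> VP" "x \<in> VG" for w x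
  proof -
    have "\<not> antipodal w (x, h)"
      using assms(4) mem_PP_iff complementary_sym[of VH EH "snd w" h] unfolding antipodal_def by auto
    then show ?thesis
      using dist_le_2_iff_not_antipodal that assms(3) by simp
  qed
  have "dist VP EP w (x, h) \<le> dist VP EP (y, h) (x, h)"
    if "w \<in> VP" "x \<in> VG" "\<not> dist VP EP (y, h) (x, h) \<le> 1" for w x y
    using near[OF that(1,2)] that(3) by linarith
  then have "max_distant VP EP (g, h) (g', h)" "max_distant VP EP (g', h) (g, h)"
    unfolding max_distant_def using far assms(1,2) by simp_all
  then show "MMD VP EP (g, h) (g', h)"
    using \<open>g \<noteq> g'\<close> assms(1-3) unfolding MMD_def by simp
qed

lemma MMD_antipode_iff:
  assumes "u \<in> VP" "v \<in> VP" "snd u \<in> PP VH EH"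
  shows "MMD VP EP u v \<longleftrightarrow> v = antipode u"
proof
  assume "MMD VP EP u v"
  then have "MMD VP EP v u" unfolding MMD_def by blast
  then have "antipodal v u"
    using MMD_imp_antipodal[OF assms(2,1) _ assms(3)] by blast
  then show "v = antipode u"
    using antipodal_sym antipodal_iff_antipode[OF assms(3)] by blast
next
  assume "v = antipode u"
  then show "MMD VP EP u v"
    using antipodal_MMD[OF assms(1,2)] antipodal_iff_antipode[OF assms(3)] by blast
qed

lemma SR_verts_modprod: "SR_verts VP EP = VP"
proof -
  have "\<exists>v. MMD VP EP u v" if u_in: "u \<in> VP" for u
  proof (cases "snd u \<in> PP VH EH")
    case True
    then have "u \<in> VG \<times> PP VH EH"
      using that by (cases u) simp
    moreover have "VG \<times> PP VH EH \<subseteq> VP"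
      using PP_subset by auto
    ultimately have "antipode u \<in> VP"
      using antipode_involution(1) by blast
    then have "MMD VP EP u (antipode u)"
      using MMD_antipode_iff[OF u_in _ True] by simp
    then show ?thesis ..
  next
    case False
    obtain g h where u: "u = (g, h)" "g \<in> VG" "h \<in> VH"
      using u_in by auto
    obtain g' where "g' \<in> VG" "g' \<noteq> g" "\<not> EG g g'"
      using no_universal_G u(2) unfolding universal_vertex_def by blast
    then have "MMD VP EP (g, h) (g', h)"
      using MMD_row_iff[OF u(2) \<open>g' \<in> VG\<close> u(3)] False u unfolding compl_edges_def by simp
    then show ?thesis using u by blast
  qed
  then show ?thesis
    unfolding SR_verts_def by blast
qed

lemma graph_iso_MMD_matching:
  "graph_iso (VG \<times> PP VH EH) (MMD VP EP)
     (kK2_verts (card VG * card (PP VH EH) div 2)) (kK2_edges (card VG * card (PP VH EH) div 2))"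
proof -
  have "finite (VG \<times> PP VH EH)"
    using graph_G graph_H PP_subset finite_subset unfolding graph_def by blast
  then have "graph_iso (VG \<times> PP VH EH) (\<lambda>u v. v = antipode u)
      (kK2_verts (card (VG \<times> PP VH EH) div 2)) (kK2_edges (card (VG \<times> PP VH EH) div 2))"
    using antipode_involution by (intro involution_graph_iso_kK2) auto
  moreover have "MMD VP EP u v \<longleftrightarrow> v = antipode u"
    if "u \<in> VG \<times> PP VH EH" "v \<in> VG \<times> PP VH EH" for u v
  proof -
    have "u \<in> VP" "v \<in> VP" "snd u \<in> PP VH EH"
      using that PP_subset by auto
    then show ?thesis by (rule MMD_antipode_iff)
  qed
  ultimately show ?thesis
    by (simp add: graph_iso_cong card_cartesian_product)
qed

lemma not_MMD_lone_partnered: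
  assumes "u \<in> VP" "v \<in> VP" "snd u \<notin> PP VH EH" "snd v \<in> PP VH EH"
  shows "\<not> MMD VP EP u v" "\<not> MMD VP EP v u"
proof -
  have "snd (antipode v) \<in> PP VH EH"
    using antipode_involution(1)[of v] assms(2,4) by (cases v) auto
  then have "u \<noteq> antipode v"
    using assms(3) by auto
  then show "\<not> MMD VP EP v u" "\<not> MMD VP EP u v"
    using MMD_antipode_iff[OF assms(2,1,4)] unfolding MMD_def by auto
qed

lemma graph_iso_SR_one_lone:
  assumes "VH - PP VH EH = {h}"
  shows "graph_iso (SR_verts VP EP) (SR_edges VP EP)
    (du_verts VG (kK2_verts (card VG * (card VH - 1) div 2)))
    (du_edges (compl_edges VG EG) (kK2_edges (card VG * (card VH - 1) div 2)))"
proof -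
  have h: "h \<in> VH" "h \<notin> PP VH EH" "PP VH EH = VH - {h}"
    using assms PP_subset by auto
  have "graph_iso (VG \<times> {h}) (MMD VP EP) VG (compl_edges VG EG)"
    using MMD_row_iff h(1,2) by (intro graph_iso_row) simp
  then have "graph_iso (VG \<times> {h} \<union> VG \<times> PP VH EH) (MMD VP EP)
      (du_verts VG (kK2_verts (card VG * card (PP VH EH) div 2)))
      (du_edges (compl_edges VG EG) (kK2_edges (card VG * card (PP VH EH) div 2)))"
    using graph_iso_MMD_matching not_MMD_lone_partnered h(1,2) PP_subset
    by (intro graph_iso_disjoint_union) auto
  moreover have "VG \<times> {h} \<union> VG \<times> PP VH EH = VP"
    using h by auto
  moreover have "card (PP VH EH) = card VH - 1"
    using h graph_H unfolding graph_def by simp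
  ultimately show ?thesis
    using SR_verts_modprod unfolding SR_edges_def by simp
qed

lemma graph_iso_SR_all_partnered:
  assumes "VH = PP VH EH"
  shows "graph_iso (SR_verts VP EP) (SR_edges VP EP)
    (kK2_verts (card VG * card VH div 2)) (kK2_edges (card VG * card VH div 2))"
  using graph_iso_MMD_matching SR_verts_modprod assms unfolding SR_edges_def by simp

end

theorem mainTheorem19:
  fixes VG :: "'a set" and EG :: "'a \<Rightarrow> 'a \<Rightarrow> bool"
    and VH :: "'b set" and EH :: "'b \<Rightarrow> 'b \<Rightarrow> bool"
  assumes "graph VG EG" and "graph VH EH"
    and "connected VG EG" and "connected VH EH"
    and "card VG \<ge> 2" and "card VH \<ge> 2"
    and "\<not> complete_graph VG EG" and "\<not> complete_graph VH EH"
    and "diam (VG \<times> VH) (modprod_edges VG EG VH EH) = 3"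
    and "\<not> (\<exists>u w. adjacent_twins VG EG u w)"
    and "\<not> (\<exists>u w. adjacent_twins VH EH u w)"
    and "\<not> (\<exists>x. universal_vertex VG EG x)"
    and "\<not> (\<exists>u w. gamma_pair VG EG u w)"
    and "\<exists>u w. gamma_pair VH EH u w"
  shows "((\<exists>h. VH - PP VH EH = {h}) \<longrightarrow>
           graph_iso
             (SR_verts (VG \<times> VH) (modprod_edges VG EG VH EH))
             (SR_edges (VG \<times> VH) (modprod_edges VG EG VH EH))
             (du_verts VG (kK2_verts (card VG * (card VH - 1) div 2)))
             (du_edges (compl_edges VG EG) (kK2_edges (card VG * (card VH - 1) div 2))))
       \<and> (VH = PP VH EH \<longrightarrow>
           graph_iso
             (SR_verts (VG \<times> VH) (modprod_edges VG EG VH EH))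
             (SR_edges (VG \<times> VH) (modprod_edges VG EG VH EH))
             (kK2_verts (card VG * card VH div 2))
             (kK2_edges (card VG * card VH div 2)))"
proof -
  from assms(14) obtain a b where "gamma_pair VH EH a b"
    by blast
  then have "\<not> (\<exists>x. universal_vertex VH EH x)"
    using gamma_pair_imp_no_universal_vertex[of VH EH a b] by blast
  then interpret modular_product VG EG VH EH
    using assms(1,2,10-13) gamma_pair_iff_complementary[OF assms(1,12)]
    by unfold_locales blast+
  show ?thesis
    using graph_iso_SR_one_lone graph_iso_SR_all_partnered by blast
qed

end
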